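(* Let $S=S^T\in\mathbb{R}^{n\times n}$ and $T=\begin{pmatrix}I&S\\ 0&I\end{pmatrix}\in\mathbb{R}^{2n\times 2n}$, and let $h>0$. Then each of the linear maps $x\mapsto Tx$ and $x\mapsto T^Tx$ on $\mathbb{R}^{2n}$ equals a P-SympNet of degree $2$ with time step $h$ and at most $n$ layers.
   Context: $x=(p,q)\in\mathbb{R}^{2n}$, $J=\begin{pmatrix}0&-I\\ I&0\end{pmatrix}$. A P-SympNet of degree $d$ with $k$ layers and time step $h$ is a composition $\phi^{H_k}_h\circ\cdots\circ\phi^{H_1}_h$ where $H_i(x)=\alpha_i(w_i^Tx)$ with $w_i\in\mathbb{R}^{2n}$ and $\alpha_i(z)=\sum_{j=1}^d a_{ij}z^j$ a real univariate polynomial; each layer is the exact flow of $\dot x=J\nabla H_i(x)$, given explicitly by $\phi^{H_i}_h(x)=x+h\,\alpha_i'(w_i^Tx)\,Jw_i$. *)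

theory Defs
  imports "HOL-Analysis.Analysis"
begin

text \<open>Phase space R^{2n} is represented as pairs x = (p, q) with p, q in real^'n,
  where n = CARD('n). The inner product on pairs is the standard one.\<close>

type_synonym 'n phase = "(real ^ 'n) \<times> (real ^ 'n)"

definition Jmat :: "'n::finite phase \<Rightarrow> 'n phase" where
  "Jmat x = (- snd x, fst x)"

text \<open>A layer is given by a vector w and the coefficient sequence a of
  alpha(z) = sum_{j=1..d} a j * z^j. Its exact flow for time h is
  x + h * alpha'(w . x) * J w.\<close>
definition alpha_deriv :: "nat \<Rightarrow> (nat \<Rightarrow> real) \<Rightarrow> real \<Rightarrow> real" where
  "alpha_deriv d a z = (\<Sum>j=1..d. a j * real j * z ^ (j - 1))"

definition psymp_layer :: "nat \<Rightarrow> real \<Rightarrow> ('n::finite phase \<times> (nat \<Rightarrow> real)) \<Rightarrow> 'n phase \<Rightarrow> 'n phase" where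
  "psymp_layer d h l x = x + (h * alpha_deriv d (snd l) (fst l \<bullet> x)) *\<^sub>R Jmat (fst l)"

text \<open>P-SympNet with layers [l_1, ..., l_k]: phi_{l_k} o ... o phi_{l_1}
  (the first list element is applied first).\<close>
fun psympnet :: "nat \<Rightarrow> real \<Rightarrow> ('n::finite phase \<times> (nat \<Rightarrow> real)) list \<Rightarrow> 'n phase \<Rightarrow> 'n phase" where
  "psympnet d h [] = id"
| "psympnet d h (l # ls) = psympnet d h ls \<circ> psymp_layer d h l"

definition Tmap :: "real ^ 'n ^ 'n \<Rightarrow> 'n::finite phase \<Rightarrow> 'n phase" where
  "Tmap S x = (fst x + S *v snd x, snd x)"

definition TTmap :: "real ^ 'n ^ 'n \<Rightarrow> 'n::finite phase \<Rightarrow> 'n phase" where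
  "TTmap S x = (fst x, transpose S *v fst x + snd x)"

end

theory Submission
  imports Defs
begin

text \<open>A symmetric matrix \<open>S\<close> of rank \<open>r \<le> n\<close> is a sum of \<open>r\<close> rank-one terms
  \<open>c\<^sub>i v\<^sub>i v\<^sub>i\<^sup>T\<close>: pick \<open>u\<close> with \<open>u\<^sup>T S u \<noteq> 0\<close> and subtract the term built from \<open>v = S u\<close>,
  which lowers the rank.
  A degree-2 layer with \<open>w = (0, v)\<close> is the shear \<open>(p, q) \<mapsto> (p - 2 h a (v \<bullet> q) v, q)\<close>,
  and shears in \<open>p\<close> depending only on \<open>q\<close> compose additively, so one layer per
  rank-one term produces \<open>T\<close>; with \<open>w = (v, 0)\<close> the same gives \<open>T\<^sup>T\<close>.\<close>

definition rank_one_sum :: "(real \<times> 'a::real_inner) list \<Rightarrow> 'a \<Rightarrow> 'a" where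
  "rank_one_sum L x = (\<Sum>(c, v) \<leftarrow> L. (c * (v \<bullet> x)) *\<^sub>R v)"

lemma rank_one_sum_Nil [simp]: "rank_one_sum [] x = 0"
  by (simp add: rank_one_sum_def)

lemma rank_one_sum_Cons [simp]:
  "rank_one_sum ((c, v) # L) x = (c * (v \<bullet> x)) *\<^sub>R v + rank_one_sum L x"
  by (simp add: rank_one_sum_def)

lemma selfadjoint_quadratic_form_zero_imp_zero:
  fixes f :: "'a::real_inner \<Rightarrow> 'a"
  assumes lin: "linear f" and sa: "\<And>x y. f x \<bullet> y = x \<bullet> f y"
    and form_zero: "\<And>u. u \<bullet> f u = 0"
  shows "f x = 0"
proof -
  \<comment> \<open>polarisation at \<open>x + f x\<close>\<close>
  have "0 = (x + f x) \<bullet> f (x + f x)" by (rule form_zero [symmetric])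
  also have "\<dots> = x \<bullet> f x + x \<bullet> f (f x) + f x \<bullet> f x + f x \<bullet> f (f x)"
    by (simp add: linear_add [OF lin] inner_add_left inner_add_right)
  also have "\<dots> = 2 * (f x \<bullet> f x)"
    using form_zero [of x] form_zero [of "f x"] sa [of x "f x"] by simp
  finally show ?thesis by simp
qed

lemma selfadjoint_rank_one_deflation:
  fixes f :: "'a::euclidean_space \<Rightarrow> 'a"
  assumes lin: "linear f" and sa: "\<And>x y. f x \<bullet> y = x \<bullet> f y"
    and u: "u \<bullet> f u \<noteq> 0"
  defines "g \<equiv> \<lambda>x. f x - ((1 / (u \<bullet> f u)) * (f u \<bullet> x)) *\<^sub>R f u"
  shows "linear g" and "\<And>x y. g x \<bullet> y = x \<bullet> g y" and "dim (range g) < dim (range f)"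
proof -
  show "linear g"
    unfolding g_def using lin
    by (intro linearI) (auto simp: linear_add linear_scale inner_add_right algebra_simps)
  show sag: "\<And>x y. g x \<bullet> y = x \<bullet> g y"
    unfolding g_def using sa by (simp add: inner_diff_left inner_diff_right inner_commute)
  have "g u = 0"
    using u unfolding g_def by (simp add: inner_commute)
  then have "range g \<subseteq> {y. y \<bullet> u = 0}"
    using sag by auto
  moreover have "subspace {y. y \<bullet> u = 0}"
    by (auto simp: subspace_def inner_add_left)
  ultimately have "span (range g) \<subseteq> {y. y \<bullet> u = 0}"
    by (rule span_minimal)
  then have "f u \<notin> span (range g)"
    using u by (auto simp: inner_commute)
  moreover have "range g \<subseteq> range f"
  proof
    fix y assume "y \<in> range g"
    then obtain x where "y = g x" by auto
    then have "y = f (x - ((1 / (u \<bullet> f u)) * (f u \<bullet> x)) *\<^sub>R u)"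
      unfolding g_def by (simp add: linear_diff [OF lin] linear_scale [OF lin])
    then show "y \<in> range f" by auto
  qed
  ultimately have "span (range g) \<subset> span (range f)"
    using span_mono span_base [of "f u" "range f"] by blast
  then show "dim (range g) < dim (range f)"
    by (rule dim_psubset)
qed

lemma selfadjoint_rank_one_decomposition:
  fixes f :: "'a::euclidean_space \<Rightarrow> 'a"
  assumes "linear f" and "\<And>x y. f x \<bullet> y = x \<bullet> f y"
  shows "\<exists>L. length L \<le> dim (range f) \<and> f = rank_one_sum L"
  using assms
proof (induction "dim (range f)" arbitrary: f rule: less_induct)
  case less
  show ?case
  proof (cases "\<forall>u. u \<bullet> f u = 0")
    case True
    then have "f = rank_one_sum []"
      using selfadjoint_quadratic_form_zero_imp_zero [OF less.prems] by auto
    then show ?thesis by (intro exI [of _ "[]"]) simp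
  next
    case False
    then obtain u where u: "u \<bullet> f u \<noteq> 0" by blast
    define c where "c = 1 / (u \<bullet> f u)"
    define g where "g = (\<lambda>x. f x - (c * (f u \<bullet> x)) *\<^sub>R f u)"
    have g: "linear g" "\<And>x y. g x \<bullet> y = x \<bullet> g y" "dim (range g) < dim (range f)"
      unfolding g_def c_def by (rule selfadjoint_rank_one_deflation [OF less.prems u])+
    obtain L where L: "length L \<le> dim (range g)" "g = rank_one_sum L"
      using less.hyps [OF g(3,1,2)] by blast
    have "f x = rank_one_sum ((c, f u) # L) x" for x
      using fun_cong [OF L(2), of x] by (simp add: g_def diff_eq_eq add.commute)
    then have "f = rank_one_sum ((c, f u) # L)" ..
    then show ?thesis
      using L(1) g(3) by (intro exI [of _ "(c, f u) # L"]) simp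
  qed
qed

lemma alpha_deriv_quadratic: "alpha_deriv 2 (\<lambda>j. if j = 2 then a else 0) z = 2 * a * z"
  by (simp add: alpha_deriv_def numeral_2_eq_2)

definition p_shear_layer :: "real \<Rightarrow> real \<times> (real ^ 'n) \<Rightarrow> 'n::finite phase \<times> (nat \<Rightarrow> real)" where
  "p_shear_layer h cv = ((0, snd cv), (\<lambda>j. if j = 2 then - fst cv / (2 * h) else 0))"

definition q_shear_layer :: "real \<Rightarrow> real \<times> (real ^ 'n) \<Rightarrow> 'n::finite phase \<times> (nat \<Rightarrow> real)" where
  "q_shear_layer h cv = ((snd cv, 0), (\<lambda>j. if j = 2 then fst cv / (2 * h) else 0))"

lemma psymp_layer_p_shear:
  assumes "h \<noteq> 0"
  shows "psymp_layer 2 h (p_shear_layer h (c, v)) x = (fst x + (c * (v \<bullet> snd x)) *\<^sub>R v, snd x)"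
  using assms unfolding psymp_layer_def p_shear_layer_def Jmat_def
  by (cases x) (simp add: alpha_deriv_quadratic inner_commute)

lemma psymp_layer_q_shear:
  assumes "h \<noteq> 0"
  shows "psymp_layer 2 h (q_shear_layer h (c, v)) x = (fst x, snd x + (c * (v \<bullet> fst x)) *\<^sub>R v)"
  using assms unfolding psymp_layer_def q_shear_layer_def Jmat_def
  by (cases x) (simp add: alpha_deriv_quadratic inner_commute)

lemma psympnet_p_shears:
  assumes "h \<noteq> 0"
  shows "psympnet 2 h (map (p_shear_layer h) L) x = (fst x + rank_one_sum L (snd x), snd x)"
proof (induction L arbitrary: x)
  case (Cons cv L)
  then show ?case
    by (cases cv) (simp add: psymp_layer_p_shear [OF assms] add.assoc)
qed simp

lemma psympnet_q_shears:
  assumes "h \<noteq> 0"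
  shows "psympnet 2 h (map (q_shear_layer h) L) x = (fst x, snd x + rank_one_sum L (fst x))"
proof (induction L arbitrary: x)
  case (Cons cv L)
  then show ?case
    by (cases cv) (simp add: psymp_layer_q_shear [OF assms] add.assoc)
qed simp

theorem mainTheorem9:
  fixes S :: "real ^ 'n::finite ^ 'n" and h :: real
  assumes "transpose S = S" and "h > 0"
  shows "(\<exists>ls. length ls \<le> CARD('n) \<and> psympnet 2 h ls = Tmap S)
       \<and> (\<exists>ls. length ls \<le> CARD('n) \<and> psympnet 2 h ls = TTmap S)"
proof -
  have "\<And>x y. (S *v x) \<bullet> y = x \<bullet> (S *v y)"
    by (metis assms(1) dot_lmul_matrix vector_transpose_matrix)
  then obtain L where L: "length L \<le> dim (range ((*v) S))" "(*v) S = rank_one_sum L"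
    using selfadjoint_rank_one_decomposition [OF matrix_vector_mul_linear] by blast
  have len: "length L \<le> CARD('n)"
    using L(1) dim_subset_UNIV [of "range ((*v) S)"] by simp
  have h: "h \<noteq> 0" using assms(2) by simp
  have "psympnet 2 h (map (p_shear_layer h) L) = Tmap S"
    using L(2) by (simp add: fun_eq_iff psympnet_p_shears [OF h] Tmap_def)
  moreover have "psympnet 2 h (map (q_shear_layer h) L) = TTmap S"
    using L(2) by (simp add: fun_eq_iff psympnet_q_shears [OF h] TTmap_def assms(1) add.commute)
  ultimately show ?thesis
    using len by (metis length_map)
qed

end
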